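(* The numbers $\operatorname{op}_{n,n-1}(123)$ satisfy $\operatorname{op}_{2,1}(123)=1$ and, for all $n>2$, $$\operatorname{op}_{n,n-1}(123) = \frac{(4n-6)(n-1)^2}{(n-2)^2(n+1)}\operatorname{op}_{n-1,n-2}(123).$$
   Context: An ordered set partition of $[n]$ into $k$ blocks is a sequence $B_1/B_2/\cdots/B_k$ of nonempty, pairwise disjoint subsets of $[n]$ whose union is $[n]$; the order of the blocks matters, but not the order of elements within a block. For a permutation $\rho=\rho_1\cdots\rho_m\in\mathcal{S}_m$, an ordered partition $B_1/\cdots/B_k$ contains $\rho$ if there are block indices $i_1<i_2<\cdots<i_m$ and elements $b_j\in B_{i_j}$ such that $b_1\cdots b_m$ is order-isomorphic to $\rho$ (i.e. $b_a<b_c$ iff $\rho_a<\rho_c$); otherwise it avoids $\rho$. $\operatorname{op}_{n,k}(\rho)$ denotes the number of ordered partitions of $[n]$ into $k$ blocks that avoid $\rho$. *)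

theory Defs
  imports Complex_Main
begin

definition ordered_set_partition :: "nat \<Rightarrow> nat \<Rightarrow> nat set list \<Rightarrow> bool" where
  "ordered_set_partition n k Bs \<longleftrightarrow>
     length Bs = k \<and>
     (\<forall>i<k. Bs ! i \<noteq> {}) \<and>
     (\<forall>i<k. \<forall>j<k. i \<noteq> j \<longrightarrow> Bs ! i \<inter> Bs ! j = {}) \<and>
     (\<Union>i<k. Bs ! i) = {1..n}"

definition order_iso :: "nat list \<Rightarrow> nat list \<Rightarrow> bool" where
  "order_iso w rho \<longleftrightarrow> length w = length rho \<and>
     (\<forall>a<length rho. \<forall>c<length rho. (w ! a < w ! c) \<longleftrightarrow> (rho ! a < rho ! c))"

text \<open>Bs contains rho: block indices i_1<...<i_m and b_j in B_{i_j} with b_1..b_m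
  order-isomorphic to rho. Indices are 0-based here.\<close>
definition osp_contains :: "nat set list \<Rightarrow> nat list \<Rightarrow> bool" where
  "osp_contains Bs rho \<longleftrightarrow>
     (\<exists>idx b. length idx = length rho \<and> length b = length rho \<and>
        sorted_wrt (<) idx \<and> (\<forall>j<length rho. idx ! j < length Bs \<and> b ! j \<in> Bs ! (idx ! j)) \<and>
        order_iso b rho)"

definition op_count :: "nat \<Rightarrow> nat \<Rightarrow> nat list \<Rightarrow> nat" where
  "op_count n k rho = card {Bs. ordered_set_partition n k Bs \<and> \<not> osp_contains Bs rho}"

end

theory Submission
  imports Defs
begin

text \<open>An ordered partition of \<open>[n]\<close> into \<open>n - 1\<close> blocks has exactly one doubleton block.
  Listing the blocks in order, the doubleton in decreasing order, identifies the 123-avoiding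
  ones with the pairs \<open>(q, w)\<close> of a 123-avoiding permutation \<open>w\<close> of \<open>[n]\<close> and a descent position
  \<open>q < n - 1\<close> of \<open>w\<close>. For each fixed \<open>q\<close>, the 123-avoiding permutations of \<open>[n]\<close> with an ascent
  at \<open>q\<close> are exactly as many as all 123-avoiding permutations of \<open>[n - 1]\<close>; this, and the
  Catalan count \<open>C(m)\<close> of 123-avoiding permutations of \<open>[m]\<close>, come from the generating tree
  that inserts the maximum inside or right after the initial descending run, whose labels are
  counted by ballot numbers. Hence
  \<open>op(n, n - 1) = (n - 1)(C(n) - C(n - 1)) = 3 (n - 1)\<^sup>2 C(n - 1) / (n + 1)\<close>,
  and the recurrence follows from the one for Catalan numbers.\<close>

lemma card_eq_sum_card_fibres:
  assumes "finite A" "finite T"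
  shows "card {x\<in>A. f x \<in> T} = (\<Sum>t\<in>T. card {x\<in>A. f x = t})"
proof -
  have "(\<Sum>t\<in>T. card {x\<in>{x\<in>A. f x \<in> T}. f x = t}) = card {x\<in>A. f x \<in> T}"
    using sum.group[of "{x\<in>A. f x \<in> T}" T f "\<lambda>_. 1::nat"] assms by auto
  moreover have "{x\<in>{x\<in>A. f x \<in> T}. f x = t} = {x\<in>A. f x = t}" if "t \<in> T" for t
    using that by auto
  ultimately show ?thesis by (metis (no_types, lifting) sum.cong)
qed

lemma card_Collect_0_Un_Collect_pos:
  "0 < t \<Longrightarrow> card ({s::nat. s = 0 \<and> P} \<union> {s. s = t \<and> Q}) = of_bool P + of_bool Q"
  by (cases P; cases Q) auto

lemma Suc_times_binomial_double: "Suc n * ((2 * n) choose Suc n) = n * ((2 * n) choose n)"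
proof -
  have "Suc n * ((2 * n) choose Suc n) = 2 * n * ((2 * n - 1) choose n)"
    by (rule binomial_absorption)
  also have "\<dots> = (2 * n - n) * ((2 * n) choose n)"
    by (rule binomial_absorb_comp[symmetric])
  finally show ?thesis by simp
qed

lemma central_binomial_Suc:
  "Suc n * ((2 * Suc n) choose Suc n) = 2 * (2 * n + 1) * ((2 * n) choose n)"
proof -
  have "Suc n * ((2 * Suc n) choose Suc n) = 2 * (Suc n * (Suc (2 * n) choose n))"
    using binomial_absorption[of n "2 * Suc n"] by simp
  also have "Suc (2 * n) choose n = Suc (2 * n) choose Suc n"
    by (subst binomial_symmetric) auto
  also have "Suc n * (Suc (2 * n) choose Suc n) = Suc (2 * n) * ((2 * n) choose n)"
    by (rule Suc_times_binomial)
  finally show ?thesis by simp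
qed

section \<open>Words, descending runs and insertion of a maximum\<close>

definition avoids_123 :: "nat list \<Rightarrow> bool" where
  "avoids_123 w \<longleftrightarrow> \<not> (\<exists>a b c. a < b \<and> b < c \<and> c < length w \<and> w!a < w!b \<and> w!b < w!c)"

definition ascent_at :: "nat list \<Rightarrow> nat \<Rightarrow> bool" where
  "ascent_at w q \<longleftrightarrow> Suc q < length w \<and> w!q < w!Suc q"

definition descent_at :: "nat list \<Rightarrow> nat \<Rightarrow> bool" where
  "descent_at w q \<longleftrightarrow> Suc q < length w \<and> w!Suc q < w!q"

fun desc_run :: "nat list \<Rightarrow> nat" where
  "desc_run [] = 0"
| "desc_run [x] = 1"
| "desc_run (x # y # r) = (if y < x then Suc (desc_run (y # r)) else 1)"

lemma desc_run_le_length: "desc_run w \<le> length w"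
  by (induction w rule: desc_run.induct) auto

lemma desc_run_pos: "w \<noteq> [] \<Longrightarrow> 0 < desc_run w"
  by (induction w rule: desc_run.induct) auto

lemma desc_run_Cons_neq_0 [simp]: "desc_run (x # r) \<noteq> 0"
  using desc_run_pos[of "x # r"] by simp

lemma desc_run_decreasing: "i < j \<Longrightarrow> j < desc_run w \<Longrightarrow> w!j < w!i"
proof (induction w arbitrary: i j rule: desc_run.induct)
  case (3 x y r)
  then have yx: "y < x" and j: "j < Suc (desc_run (y # r))"
    by (auto split: if_splits)
  obtain j' where j': "j = Suc j'" using \<open>i < j\<close> by (cases j) auto
  show ?case
  proof (cases i)
    case 0
    then show ?thesis
      using "3.IH"[OF yx, of 0 j'] yx j j' by (cases j') auto
  next
    case (Suc i')
    then show ?thesis using "3.IH"[OF yx, of i' j'] "3.prems" j j' by simp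
  qed
qed auto

lemma desc_run_maximal: "desc_run w < length w \<Longrightarrow> \<not> w!desc_run w < w!(desc_run w - 1)"
  by (induction w rule: desc_run.induct) (auto simp: nth_Cons desc_run_pos split: nat.splits)

lemma desc_run_eqI:
  assumes "0 < t" "t \<le> length w" "\<And>i. Suc i < t \<Longrightarrow> w!Suc i < w!i"
    "t < length w \<Longrightarrow> \<not> w!t < w!(t - 1)"
  shows "desc_run w = t"
  using assms
proof (induction w arbitrary: t rule: desc_run.induct)
  case (3 x y r)
  show ?case
  proof (cases "t = 1")
    case True
    then show ?thesis using "3.prems"(4) by auto
  next
    case False
    then have t2: "2 \<le> t" using "3.prems"(1) by simp
    have yx: "y < x" using "3.prems"(3)[of 0] t2 by simp
    have "desc_run (y # r) = t - 1"
    proof (rule "3.IH"[OF yx])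
      show "0 < t - 1" "t - 1 \<le> length (y # r)" using t2 "3.prems"(2) by auto
      show "(y # r)!Suc i < (y # r)!i" if "Suc i < t - 1" for i
        using "3.prems"(3)[of "Suc i"] that by simp
      show "\<not> (y # r)!(t - 1) < (y # r)!(t - 1 - 1)" if "t - 1 < length (y # r)"
        using "3.prems"(4) that t2 by (cases t) (auto simp: nth_Cons split: nat.splits)
    qed
    then show ?thesis using yx t2 by simp
  qed
qed auto

definition insert_at :: "nat \<Rightarrow> nat \<Rightarrow> nat list \<Rightarrow> nat list" where
  "insert_at x s w = take s w @ x # drop s w"

lemma length_insert_at [simp]: "s \<le> length w \<Longrightarrow> length (insert_at x s w) = Suc (length w)"
  by (simp add: insert_at_def)

lemma set_insert_at: "set (insert_at x s w) = insert x (set w)"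
  by (simp add: insert_at_def) (metis Un_insert_right append_take_drop_id set_append)

lemma nth_insert_at:
  "s \<le> length w \<Longrightarrow>
    insert_at x s w ! i = (if i < s then w!i else if i = s then x else w!(i - 1))"
  by (auto simp: insert_at_def nth_append min_def nth_Cons split: nat.splits
      intro: arg_cong[where f = "(!) w"])

lemma insert_at_inj:
  assumes "m \<notin> set w" "s \<le> length w" "s' \<le> length w'"
    and "insert_at m s w = insert_at m s' w'"
  shows "s = s' \<and> w = w'"
proof -
  have "m \<notin> set (take s w)" "m \<notin> set (drop s w)"
    using assms(1) by (meson in_set_takeD in_set_dropD)+
  then have take: "take s w = take s' w'" and drop: "drop s w = drop s' w'"
    using assms(4) append_Cons_eq_iff[of m "take s w" "drop s w"] by (simp_all add: insert_at_def)
  have "w = w'" by (metis append_take_drop_id take drop)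
  moreover have "s = s'" using take assms(2,3) \<open>w = w'\<close> by (metis length_take min.absorb2)
  ultimately show ?thesis by simp
qed

lemma avoids_123_of_insert_at:
  assumes s: "s \<le> length w" and av: "avoids_123 (insert_at x s w)"
  shows "avoids_123 w"
  unfolding avoids_123_def
proof
  assume "\<exists>a b c. a < b \<and> b < c \<and> c < length w \<and> w!a < w!b \<and> w!b < w!c"
  then obtain a b c where abc: "a < b" "b < c" "c < length w" "w!a < w!b" "w!b < w!c"
    by blast
  define f where "f i = (if i < s then i else Suc i)" for i
  have "f a < f b" "f b < f c" "f c < length (insert_at x s w)" using abc s by (auto simp: f_def)
  moreover have "insert_at x s w ! f i = w!i" for i using s by (simp add: f_def nth_insert_at)
  ultimately show False using av abc(4,5) unfolding avoids_123_def by (metis (no_types))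
qed

lemma le_desc_run_of_avoids_123_insert_at_max:
  assumes less: "\<forall>x\<in>set w. x < m" and s: "s \<le> length w" and dist: "distinct w"
    and av: "avoids_123 (insert_at m s w)"
  shows "s \<le> desc_run w"
proof (rule ccontr)
  let ?v = "insert_at m s w"
  define l where "l = desc_run w"
  assume "\<not> s \<le> desc_run w"
  then have "l < s" by (simp add: l_def)
  with s have "l < length w" by simp
  then have "0 < l" using desc_run_pos[of w] by (cases w) (auto simp: l_def)
  have "\<not> w!l < w!(l - 1)" using desc_run_maximal \<open>l < length w\<close> by (simp add: l_def)
  moreover have "w!l \<noteq> w!(l - 1)" using dist \<open>l < length w\<close> \<open>0 < l\<close> by (simp add: nth_eq_iff_index_eq)
  moreover have "w!l < m" using less \<open>l < length w\<close> by simp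
  \<comment> \<open>the last two entries of the run, followed by the inserted maximum, form a 123\<close>
  ultimately have "?v!(l - 1) < ?v!l \<and> ?v!l < ?v!s"
    using \<open>l < s\<close> \<open>0 < l\<close> s by (auto simp: nth_insert_at)
  moreover have "l - 1 < l" "s < length ?v" using \<open>0 < l\<close> s by auto
  ultimately show False using av \<open>l < s\<close> unfolding avoids_123_def by blast
qed

lemma avoids_123_insert_at_max:
  assumes less: "\<forall>x\<in>set w. x < m" and s: "s \<le> desc_run w" and av: "avoids_123 w"
  shows "avoids_123 (insert_at m s w)"
  unfolding avoids_123_def
proof
  let ?v = "insert_at m s w"
  have sl: "s \<le> length w" using s desc_run_le_length order_trans by blast
  have v_nth: "?v ! i = (if i < s then w!i else if i = s then m else w!(i - 1))" for i
    using sl by (rule nth_insert_at)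
  assume "\<exists>a b c. a < b \<and> b < c \<and> c < length ?v \<and> ?v!a < ?v!b \<and> ?v!b < ?v!c"
  then obtain a b c where abc: "a < b" "b < c" "c < length ?v" "?v!a < ?v!b" "?v!b < ?v!c"
    by blast
  show False
  proof (cases "c = s")
    case True
    \<comment> \<open>entries before the maximum lie in the decreasing run\<close>
    then show False using desc_run_decreasing[of a b w] abc s by (simp add: v_nth)
  next
    case False
    have below: "i \<noteq> s \<Longrightarrow> i < length ?v \<Longrightarrow> ?v!i < m" for i
      using less sl by (auto simp: v_nth)
    have "b \<noteq> s" using below[of c] abc False by (auto simp: v_nth)
    moreover from this have "a \<noteq> s" using below[of b] abc by (auto simp: v_nth)
    moreover define g where "g i = (if i < s then i else i - 1)" for i
    ultimately have "g a < g b" "g b < g c" "g c < length w" "w!g a < w!g b" "w!g b < w!g c"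
      using abc False sl by (auto simp: g_def v_nth)
    then show False using av unfolding avoids_123_def by blast
  qed
qed

lemma desc_run_insert_at_max:
  assumes less: "\<forall>x\<in>set w. x < m" and s: "s \<le> desc_run w"
  shows "desc_run (insert_at m s w) = (if s = 0 then Suc (desc_run w) else s)"
proof (cases "s = 0")
  case True
  then show ?thesis using less by (cases w) (auto simp: insert_at_def)
next
  case False
  have sl: "s \<le> length w" using s desc_run_le_length order_trans by blast
  have "desc_run (insert_at m s w) = s"
  proof (rule desc_run_eqI)
    show "0 < s" "s \<le> length (insert_at m s w)" using False sl by auto
    show "insert_at m s w ! Suc i < insert_at m s w ! i" if "Suc i < s" for i
      using that desc_run_decreasing[of i "Suc i" w] s by (simp add: nth_insert_at sl)
    have "w!(s - 1) < m" using less sl False by auto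
    then show "\<not> insert_at m s w ! s < insert_at m s w ! (s - 1)"
      using sl False by (simp add: nth_insert_at)
  qed
  then show ?thesis using False by simp
qed

lemma ascent_at_insert_at_max:
  assumes less: "\<forall>x\<in>set w. x < m" and s: "s \<le> desc_run w"
  shows "ascent_at (insert_at m s w) q \<longleftrightarrow> Suc q = s \<or> (s < q \<and> ascent_at w (q - 1))"
proof -
  have sl: "s \<le> length w" using s desc_run_le_length order_trans by blast
  consider "Suc q < s" | "Suc q = s" | "q = s" | "s < q" by linarith
  then show ?thesis
  proof cases
    case 1
    then show ?thesis using desc_run_decreasing[of q "Suc q" w] s sl
      by (auto simp: ascent_at_def nth_insert_at)
  next
    case 2
    then show ?thesis using less sl by (auto simp: ascent_at_def nth_insert_at)
  next
    case 3
    have "s < length w \<Longrightarrow> w!s < m" using less by auto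
    then show ?thesis using 3 sl by (auto simp: ascent_at_def nth_insert_at)
  next
    case 4
    then show ?thesis using sl by (cases q) (auto simp: ascent_at_def nth_insert_at)
  qed
qed

section \<open>The generating tree of 123-avoiding permutations\<close>

definition Av123 :: "nat \<Rightarrow> nat list set" where
  "Av123 N = {w. distinct w \<and> set w = {1..N} \<and> avoids_123 w}"

lemma length_Av123: "w \<in> Av123 N \<Longrightarrow> length w = N"
  unfolding Av123_def using distinct_card by fastforce

lemma finite_Av123: "finite (Av123 N)"
proof (rule finite_subset)
  show "Av123 N \<subseteq> {w. set w \<subseteq> {1..N} \<and> length w = N}"
    using length_Av123 by (auto simp: Av123_def)
  show "finite {w. set w \<subseteq> {1..N} \<and> length w = N}"
    by (rule finite_lists_length_eq) simp
qed

lemma Av123_0: "Av123 0 = {[]}"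
  by (auto simp: Av123_def avoids_123_def)

lemma desc_run_Av123_le: "w \<in> Av123 N \<Longrightarrow> desc_run w \<le> N"
  using desc_run_le_length[of w] by (simp add: length_Av123)

lemma desc_run_Av123_Suc_pos: "w \<in> Av123 (Suc N) \<Longrightarrow> 0 < desc_run w"
  by (rule desc_run_pos) (auto dest: length_Av123)

lemma insert_at_max_in_Av123:
  assumes w: "w \<in> Av123 N" and s: "s \<le> desc_run w"
  shows "insert_at (Suc N) s w \<in> Av123 (Suc N)"
proof -
  have less: "\<forall>x\<in>set w. x < Suc N" and fresh: "Suc N \<notin> set w" and dist: "distinct w"
    using w by (auto simp: Av123_def)
  have "distinct (insert_at (Suc N) s w)"
    using dist fresh
    by (auto simp: insert_at_def set_take_disj_set_drop_if_distinct dest: in_set_takeD in_set_dropD)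
  moreover have "set (insert_at (Suc N) s w) = {1..Suc N}"
    using w by (auto simp: set_insert_at Av123_def)
  moreover have "avoids_123 (insert_at (Suc N) s w)"
    using avoids_123_insert_at_max[OF less s] w by (simp add: Av123_def)
  ultimately show ?thesis by (simp add: Av123_def)
qed

lemma Av123_Suc_obtain_insert_at_max:
  assumes v: "v \<in> Av123 (Suc N)"
  obtains w s where "w \<in> Av123 N" "s \<le> desc_run w" "v = insert_at (Suc N) s w"
proof -
  have "Suc N \<in> set v" using v by (auto simp: Av123_def)
  then obtain xs ys where split: "v = xs @ Suc N # ys" by (meson split_list)
  define w where "w = xs @ ys"
  have v_eq: "v = insert_at (Suc N) (length xs) w" by (simp add: split insert_at_def w_def)
  have dist: "distinct w" and "Suc N \<notin> set w"
    using v by (auto simp: split w_def Av123_def)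
  moreover have "set v = insert (Suc N) (set w)" by (auto simp: split w_def)
  ultimately have "set w = set v - {Suc N}" by blast
  then have set_w: "set w = {1..N}" using v by (auto simp: Av123_def atLeastAtMostSuc_conv)
  have "avoids_123 (insert_at (Suc N) (length xs) w)"
    using v by (simp add: Av123_def v_eq[symmetric])
  moreover have "\<forall>x\<in>set w. x < Suc N" "length xs \<le> length w"
    using set_w by (auto simp: w_def)
  ultimately have "avoids_123 w" "length xs \<le> desc_run w"
    using avoids_123_of_insert_at le_desc_run_of_avoids_123_insert_at_max dist by blast+
  then show ?thesis using that dist set_w v_eq by (simp add: Av123_def)
qed

text \<open>Every 123-avoiding permutation of \<open>[N+1]\<close> arises exactly once by inserting \<open>N+1\<close> into a
  123-avoiding permutation \<open>w\<close> of \<open>[N]\<close>, inside or just after its initial descending run.\<close>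

lemma card_Av123_Suc_insert:
  "card {v \<in> Av123 (Suc N). P v} =
    (\<Sum>w\<in>Av123 N. card {s. s \<le> desc_run w \<and> P (insert_at (Suc N) s w)})"
proof -
  let ?S = "SIGMA w:Av123 N. {s. s \<le> desc_run w \<and> P (insert_at (Suc N) s w)}"
  let ?f = "\<lambda>(w, s). insert_at (Suc N) s w"
  have le_length: "s \<le> length w" if "s \<le> desc_run w" for s w
    using that desc_run_le_length order_trans by blast
  have "bij_betw ?f ?S {v \<in> Av123 (Suc N). P v}"
  proof (rule bij_betw_imageI)
    show "inj_on ?f ?S"
    proof (rule inj_onI, clarsimp)
      fix w s w' s'
      assume "w \<in> Av123 N" "s \<le> desc_run w" "s' \<le> desc_run w'"
        and eq: "insert_at (Suc N) s w = insert_at (Suc N) s' w'"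
      then have "Suc N \<notin> set w" by (auto simp: Av123_def)
      then show "w = w' \<and> s = s'"
        using insert_at_inj[OF _ le_length le_length eq] \<open>s \<le> desc_run w\<close> \<open>s' \<le> desc_run w'\<close>
        by blast
    qed
    show "?f ` ?S = {v \<in> Av123 (Suc N). P v}"
    proof (intro equalityI subsetI)
      fix v assume "v \<in> ?f ` ?S"
      then show "v \<in> {v \<in> Av123 (Suc N). P v}" using insert_at_max_in_Av123 by auto
    next
      fix v assume v: "v \<in> {v \<in> Av123 (Suc N). P v}"
      then obtain w s where "w \<in> Av123 N" "s \<le> desc_run w" "v = insert_at (Suc N) s w"
        using Av123_Suc_obtain_insert_at_max by blast
      then show "v \<in> ?f ` ?S" using v by force
    qed
  qed
  then have "card {v \<in> Av123 (Suc N). P v} = card ?S" by (simp add: bij_betw_same_card)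
  also have "\<dots> = (\<Sum>w\<in>Av123 N. card {s. s \<le> desc_run w \<and> P (insert_at (Suc N) s w)})"
    by (rule card_SigmaI) (auto simp: finite_Av123)
  finally show ?thesis .
qed

section \<open>Counting by the length of the descending run\<close>

definition run_count :: "nat \<Rightarrow> nat \<Rightarrow> nat" where
  "run_count N t = card {w \<in> Av123 N. desc_run w = t}"

lemma card_Av123_eq_sum_run_count: "card (Av123 N) = (\<Sum>t\<le>N. run_count N t)"
proof -
  have "card (Av123 N) = card {w \<in> Av123 N. desc_run w \<in> {..N}}"
    using desc_run_Av123_le by (intro arg_cong[where f = card]) auto
  also have "\<dots> = (\<Sum>t\<le>N. card {w \<in> Av123 N. desc_run w = t})"
    by (rule card_eq_sum_card_fibres[OF finite_Av123]) simp
  finally show ?thesis unfolding run_count_def .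
qed

lemma run_count_Suc_0: "run_count (Suc N) 0 = 0"
proof -
  have "{w \<in> Av123 (Suc N). desc_run w = 0} = {}" using desc_run_Av123_Suc_pos by fastforce
  then show ?thesis by (simp only: run_count_def card.empty)
qed

lemma insertion_sites_run:
  assumes "\<forall>x\<in>set w. x < m" "1 \<le> s"
  shows "{s'. s' \<le> desc_run w \<and> desc_run (insert_at m s' w) = s} =
    {s'. s' = 0 \<and> desc_run w = s - 1} \<union> {s'. s' = s \<and> s \<le> desc_run w}"
  \<comment> \<open>inserting at the front extends the run, inserting at \<open>s' > 0\<close> cuts it to length \<open>s'\<close>\<close>
  using desc_run_insert_at_max[OF assms(1)] assms(2) by (auto split: if_splits)

lemma run_count_Suc:
  assumes "1 \<le> s"
  shows "run_count (Suc N) s = run_count N (s - 1) + (\<Sum>t\<in>{s..N}. run_count N t)"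
proof -
  have "run_count (Suc N) s =
      (\<Sum>w\<in>Av123 N. card {s'. s' \<le> desc_run w \<and> desc_run (insert_at (Suc N) s' w) = s})"
    unfolding run_count_def by (rule card_Av123_Suc_insert)
  also have "\<dots> = (\<Sum>w\<in>Av123 N. of_bool (desc_run w = s - 1) + of_bool (s \<le> desc_run w))"
    using insertion_sites_run assms
    by (intro sum.cong) (simp_all add: card_Collect_0_Un_Collect_pos Av123_def)
  also have "\<dots> = run_count N (s - 1) + card {w \<in> Av123 N. s \<le> desc_run w}"
    by (simp add: sum.distrib finite_Av123 run_count_def Int_def)
  also have "{w \<in> Av123 N. s \<le> desc_run w} = {w \<in> Av123 N. desc_run w \<in> {s..N}}"
    using desc_run_Av123_le by auto
  also have "card {w \<in> Av123 N. desc_run w \<in> {s..N}} = (\<Sum>t\<in>{s..N}. run_count N t)"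
    unfolding run_count_def by (rule card_eq_sum_card_fibres[OF finite_Av123]) simp
  finally show ?thesis .
qed

lemma card_Av123_eq_run_count: "card (Av123 N) = run_count (Suc N) 1"
proof -
  have "{..N} = insert 0 {1..N}" by auto
  then show ?thesis using run_count_Suc[of 1 N] by (simp add: card_Av123_eq_sum_run_count)
qed

definition ballot :: "nat \<Rightarrow> nat \<Rightarrow> int" where
  "ballot N t = int ((2 * N - t - 1) choose (N - 1)) - int ((2 * N - t - 1) choose N)"

lemma ballot_0: "1 \<le> N \<Longrightarrow> ballot N 0 = 0"
  using binomial_symmetric[of "N - 1" "2 * N - 1"] by (simp add: ballot_def)

lemma ballot_diff:
  assumes "1 \<le> N" "1 \<le> t" "t \<le> Suc N"
  shows "ballot (Suc N) t - ballot (Suc N) (Suc t) = ballot N (t - 1)"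
proof -
  obtain k where "N = Suc k" using assms(1) by (cases N) auto
  moreover have "2 * Suc N - t - 1 = Suc (2 * N - t)" "2 * Suc N - Suc t - 1 = 2 * N - t"
    "2 * N - (t - 1) - 1 = 2 * N - t"
    using assms by auto
  ultimately show ?thesis by (simp add: ballot_def)
qed

lemma sum_ballot:
  assumes "1 \<le> N" "s \<le> Suc N"
  shows "(\<Sum>t\<in>{s..N}. ballot N t) = ballot (Suc N) (Suc s)"
  using assms(2)
proof (induction s rule: inc_induct)
  case base
  then show ?case using assms(1) by (simp add: ballot_def binomial_eq_0)
next
  case (step n)
  then have "{n..N} = insert n {Suc n..N}" by auto
  then show ?case using step ballot_diff[OF assms(1), of "Suc n"] by simp
qed

lemma run_count_eq_ballot: "1 \<le> t \<Longrightarrow> t \<le> N \<Longrightarrow> int (run_count N t) = ballot N t"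
proof (induction N arbitrary: t)
  case 0
  then show ?case by simp
next
  case (Suc N)
  show ?case
  proof (cases N)
    case 0
    have "{w \<in> Av123 0. desc_run w = 0} = {[]}" by (auto simp: Av123_0)
    then have "run_count (Suc N) t = 1"
      using Suc.prems run_count_Suc[of 1 0] 0 by (simp add: run_count_def)
    then show ?thesis using Suc.prems 0 by (simp add: ballot_def)
  next
    case (Suc k)
    then have N: "1 \<le> N" by simp
    have "int (run_count N (t - 1)) = ballot N (t - 1)"
      using Suc.IH Suc.prems ballot_0[OF N] run_count_Suc_0 \<open>N = Suc k\<close>
      by (cases "t = 1") auto
    moreover have "(\<Sum>t'\<in>{t..N}. int (run_count N t')) = (\<Sum>t'\<in>{t..N}. ballot N t')"
      using Suc.IH Suc.prems by (intro sum.cong) auto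
    ultimately have "int (run_count (Suc N) t) = ballot N (t - 1) + ballot (Suc N) (Suc t)"
      using run_count_Suc[of t N] sum_ballot[OF N, of t] Suc.prems by simp
    then show ?thesis using ballot_diff[OF N, of t] Suc.prems by simp
  qed
qed

lemma card_Av123_binomial:
  "int (card (Av123 N)) = int ((2 * N) choose N) - int ((2 * N) choose Suc N)"
  using card_Av123_eq_run_count run_count_eq_ballot[of 1 "Suc N"] by (simp add: ballot_def)

lemma Suc_times_card_Av123: "Suc N * card (Av123 N) = (2 * N) choose N"
proof -
  have "int (Suc N) * int ((2 * N) choose Suc N) = int N * int ((2 * N) choose N)"
    using Suc_times_binomial_double[of N] by (simp only: of_nat_mult[symmetric])
  then have "int (Suc N) * int (card (Av123 N)) = int ((2 * N) choose N)"
    by (simp add: card_Av123_binomial right_diff_distrib algebra_simps)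
  then show ?thesis by (simp only: of_nat_mult[symmetric] of_nat_eq_iff)
qed

lemma card_Av123_Suc: "(N + 2) * card (Av123 (Suc N)) = 2 * (2 * N + 1) * card (Av123 N)"
proof -
  have "Suc N * ((N + 2) * card (Av123 (Suc N))) = Suc N * ((2 * Suc N) choose Suc N)"
    using Suc_times_card_Av123[of "Suc N"] by simp
  also have "\<dots> = 2 * (2 * N + 1) * ((2 * N) choose N)"
    by (rule central_binomial_Suc)
  also have "\<dots> = Suc N * (2 * (2 * N + 1) * card (Av123 N))"
    by (subst Suc_times_card_Av123[symmetric]) (simp add: algebra_simps)
  finally show ?thesis by (simp only: mult_cancel1) simp
qed

section \<open>Ascents at a fixed position\<close>

lemma desc_run_le_of_ascent_at: "ascent_at w q \<Longrightarrow> desc_run w \<le> Suc q"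
  using desc_run_decreasing[of q "Suc q" w] by (auto simp: ascent_at_def not_le[symmetric])

lemma desc_run_neq_of_ascent_at:
  assumes av: "avoids_123 w" and dist: "distinct w" and asc: "ascent_at w q"
  shows "desc_run w \<noteq> q"
proof
  assume run: "desc_run w = q"
  have len: "Suc q < length w" using asc by (simp add: ascent_at_def)
  then have "0 < q" using run desc_run_pos[of w] by (cases w) auto
  have "\<not> w!q < w!(q - 1)" using desc_run_maximal[of w] run len by simp
  moreover have "w!q \<noteq> w!(q - 1)" using dist len \<open>0 < q\<close> by (simp add: nth_eq_iff_index_eq)
  \<comment> \<open>the run ends at \<open>q - 1\<close> with an ascent, so together with the ascent at \<open>q\<close> we get a 123\<close>
  ultimately have "w!(q - 1) < w!q \<and> w!q < w!Suc q" using asc by (simp add: ascent_at_def)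
  moreover have "q - 1 < q" "q < Suc q" using \<open>0 < q\<close> by auto
  ultimately show False using av len unfolding avoids_123_def by blast
qed

lemma ascent_at_of_desc_run:
  assumes "distinct w" "desc_run w = Suc q" "Suc q < length w"
  shows "ascent_at w q"
proof -
  have "\<not> w!Suc q < w!q" using desc_run_maximal[of w] assms(2,3) by simp
  moreover have "w!Suc q \<noteq> w!q" using assms(1,3) by (simp add: nth_eq_iff_index_eq)
  ultimately show ?thesis using assms(3) by (simp add: ascent_at_def)
qed

lemma card_Av123_ascent_run_ge:
  assumes exact: "\<And>t'. t \<le> t' \<Longrightarrow> t' < q \<Longrightarrow>
      card {w \<in> Av123 (Suc N). ascent_at w q \<and> desc_run w = t'} = run_count N t'"
    and "1 \<le> t" "t \<le> q" "q < N"
  shows "card {w \<in> Av123 (Suc N). ascent_at w q \<and> t \<le> desc_run w} = (\<Sum>t'\<in>{t..N}. run_count N t')"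
proof -
  let ?A = "{w \<in> Av123 (Suc N). ascent_at w q \<and> desc_run w \<in> {t..<q}}"
  let ?B = "{w \<in> Av123 (Suc N). desc_run w = Suc q}"
  \<comment> \<open>an ascent at \<open>q\<close> bounds the run by \<open>q + 1\<close> and excludes \<open>q\<close>;
    a run of exactly \<open>q + 1\<close> forces the ascent\<close>
  have split: "{w \<in> Av123 (Suc N). ascent_at w q \<and> t \<le> desc_run w} = ?A \<union> ?B"
  proof (intro equalityI subsetI)
    fix w assume w: "w \<in> {w \<in> Av123 (Suc N). ascent_at w q \<and> t \<le> desc_run w}"
    then have "desc_run w \<le> Suc q" "desc_run w \<noteq> q"
      using desc_run_le_of_ascent_at desc_run_neq_of_ascent_at by (auto simp: Av123_def)
    then show "w \<in> ?A \<union> ?B" using w by auto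
  next
    fix w assume "w \<in> ?A \<union> ?B"
    moreover have "ascent_at w q" if "w \<in> ?B"
      using that assms(4) length_Av123[of w "Suc N"]
      by (intro ascent_at_of_desc_run) (auto simp: Av123_def)
    ultimately show "w \<in> {w \<in> Av123 (Suc N). ascent_at w q \<and> t \<le> desc_run w}"
      using assms(3) by auto
  qed
  have "card {w \<in> Av123 (Suc N). ascent_at w q \<and> t \<le> desc_run w} = card ?A + card ?B"
    unfolding split by (rule card_Un_disjoint) (auto simp: finite_Av123)
  also have "card ?A = (\<Sum>t'\<in>{t..<q}. card {w \<in> Av123 (Suc N). ascent_at w q \<and> desc_run w = t'})"
    using card_eq_sum_card_fibres[of "{w \<in> Av123 (Suc N). ascent_at w q}" "{t..<q}" desc_run]
    by (simp add: finite_Av123 conj_assoc)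
  also have "\<dots> = (\<Sum>t'\<in>{t..<q}. run_count N t')"
    using exact by (intro sum.cong) auto
  also have "card ?B = run_count N q + (\<Sum>t'\<in>{Suc q..N}. run_count N t')"
    using run_count_Suc[of "Suc q" N] by (simp add: run_count_def)
  also have "(\<Sum>t'\<in>{t..<q}. run_count N t') + \<dots> = (\<Sum>t'\<in>{t..N}. run_count N t')"
  proof -
    have "{t..N} = {t..<q} \<union> insert q {Suc q..N}" "{t..<q} \<inter> insert q {Suc q..N} = {}"
      using assms(3,4) by auto
    then show ?thesis by (simp add: sum.union_disjoint)
  qed
  finally show ?thesis .
qed

lemma insertion_sites_ascent_run:
  assumes "\<forall>x\<in>set w. x < m" "1 \<le> t" "t < q"
  shows "{s. s \<le> desc_run w \<and> ascent_at (insert_at m s w) q \<and> desc_run (insert_at m s w) = t} =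
    {s. s = 0 \<and> ascent_at w (q - 1) \<and> desc_run w = t - 1}
    \<union> {s. s = t \<and> ascent_at w (q - 1) \<and> t \<le> desc_run w}"
  \<comment> \<open>inserting at the front shifts an ascent at \<open>q - 1\<close> to \<open>q\<close>; inserting at \<open>t\<close> keeps it there\<close>
  using desc_run_insert_at_max[OF assms(1)] ascent_at_insert_at_max[OF assms(1)] assms(2,3)
  by (auto split: if_splits)

lemma card_Av123_ascent_run:
  "1 \<le> t \<Longrightarrow> t < q \<Longrightarrow> q < N \<Longrightarrow>
    card {w \<in> Av123 (Suc N). ascent_at w q \<and> desc_run w = t} = run_count N t"
proof (induction N arbitrary: q t)
  case 0
  then show ?case by simp
next
  case (Suc N)
  then have "q - 1 < N" by auto
  let ?sites = "\<lambda>w. {s. s \<le> desc_run w \<and>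
      ascent_at (insert_at (Suc (Suc N)) s w) q \<and> desc_run (insert_at (Suc (Suc N)) s w) = t}"
  have "card {v \<in> Av123 (Suc (Suc N)). ascent_at v q \<and> desc_run v = t} =
      (\<Sum>w\<in>Av123 (Suc N). card (?sites w))"
    by (rule card_Av123_Suc_insert)
  also have "\<dots> = (\<Sum>w\<in>Av123 (Suc N). of_bool (ascent_at w (q - 1) \<and> desc_run w = t - 1)
      + of_bool (ascent_at w (q - 1) \<and> t \<le> desc_run w))"
    using insertion_sites_ascent_run Suc.prems
    by (intro sum.cong) (simp_all add: card_Collect_0_Un_Collect_pos Av123_def)
  also have "\<dots> = card {w \<in> Av123 (Suc N). ascent_at w (q - 1) \<and> desc_run w = t - 1}
      + card {w \<in> Av123 (Suc N). ascent_at w (q - 1) \<and> t \<le> desc_run w}"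
    by (simp add: sum.distrib finite_Av123 Int_def)
  also have "card {w \<in> Av123 (Suc N). ascent_at w (q - 1) \<and> desc_run w = t - 1} = run_count N (t - 1)"
  proof (cases "t = 1")
    case True
    then show ?thesis
      using desc_run_Av123_Suc_pos \<open>q - 1 < N\<close> run_count_Suc_0[of "N - 1"]
      by (cases N) (auto simp: card_eq_0_iff)
  next
    case False
    then show ?thesis using Suc.IH[of "t - 1" "q - 1"] Suc.prems by simp
  qed
  also have "card {w \<in> Av123 (Suc N). ascent_at w (q - 1) \<and> t \<le> desc_run w} =
      (\<Sum>t'\<in>{t..N}. run_count N t')"
    using Suc.IH Suc.prems \<open>q - 1 < N\<close> by (intro card_Av123_ascent_run_ge) auto
  also have "run_count N (t - 1) + (\<Sum>t'\<in>{t..N}. run_count N t') = run_count (Suc N) t"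
    using run_count_Suc[of t N] Suc.prems by simp
  finally show ?case unfolding run_count_def .
qed

lemma card_Av123_ascent:
  assumes "q < M"
  shows "card {w \<in> Av123 (Suc M). ascent_at w q} = card (Av123 M)"
proof (cases q)
  case 0
  have "{w \<in> Av123 (Suc M). ascent_at w 0} = {w \<in> Av123 (Suc M). desc_run w = 1}"
    using desc_run_le_of_ascent_at[of _ 0] desc_run_Av123_Suc_pos ascent_at_of_desc_run[of _ 0]
      length_Av123 assms 0
    by (fastforce simp: Av123_def)
  then show ?thesis using 0 card_Av123_eq_run_count by (simp add: run_count_def)
next
  case (Suc k)
  have "{w \<in> Av123 (Suc M). ascent_at w q} = {w \<in> Av123 (Suc M). ascent_at w q \<and> 1 \<le> desc_run w}"
    using desc_run_Av123_Suc_pos by fastforce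
  also have "card \<dots> = (\<Sum>t\<in>{1..M}. run_count M t)"
    using card_Av123_ascent_run assms Suc by (intro card_Av123_ascent_run_ge) auto
  also have "\<dots> = card (Av123 M)"
    using card_Av123_eq_run_count[of M] run_count_Suc[of 1 M] run_count_Suc_0[of "M - 1"] assms
    by (cases M) auto
  finally show ?thesis .
qed

lemma card_Av123_descent:
  assumes "q < M"
  shows "card {w \<in> Av123 (Suc M). descent_at w q} + card (Av123 M) = card (Av123 (Suc M))"
proof -
  have "{w \<in> Av123 (Suc M). descent_at w q} = Av123 (Suc M) - {w \<in> Av123 (Suc M). ascent_at w q}"
  proof (intro set_eqI iffI)
    fix w assume "w \<in> Av123 (Suc M) - {w \<in> Av123 (Suc M). ascent_at w q}"
    moreover from this have "w!Suc q \<noteq> w!q" "Suc q < length w"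
      using length_Av123 assms by (auto simp: Av123_def nth_eq_iff_index_eq)
    ultimately show "w \<in> {w \<in> Av123 (Suc M). descent_at w q}"
      by (auto simp: ascent_at_def descent_at_def)
  qed (auto simp: ascent_at_def descent_at_def)
  then show ?thesis
    using card_Av123_ascent[OF assms] card_mono[OF finite_Av123, of "{w \<in> Av123 (Suc M). ascent_at w q}"]
    by (simp add: card_Diff_subset finite_Av123)
qed

section \<open>Ordered partitions of \<open>[n]\<close> into \<open>n - 1\<close> blocks\<close>

lemma order_iso_123_iff: "order_iso [x, y, z] [1, 2, 3] \<longleftrightarrow> x < y \<and> y < z"
proof
  assume "order_iso [x, y, z] [1, 2, 3]"
  then have iso: "\<forall>a<3. \<forall>c<3. ([x, y, z]!a < [x, y, z]!c) = ([1, 2, 3::nat]!a < [1, 2, 3]!c)"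
    by (simp add: order_iso_def)
  show "x < y \<and> y < z" using iso[rule_format, of 0 1] iso[rule_format, of 1 2] by simp
next
  assume "x < y \<and> y < z"
  then show "order_iso [x, y, z] [1, 2, 3]"
    unfolding order_iso_def by (auto simp: less_Suc_eq nth_Cons split: nat.splits)
qed

lemma osp_contains_123_iff:
  "osp_contains Bs [1, 2, 3] \<longleftrightarrow>
    (\<exists>i j k x y z. i < j \<and> j < k \<and> k < length Bs \<and> x \<in> Bs!i \<and> y \<in> Bs!j \<and> z \<in> Bs!k \<and>
      x < y \<and> y < z)"
proof
  assume "osp_contains Bs [1, 2, 3]"
  then obtain idx b where idx: "length idx = 3" "sorted_wrt (<) idx"
      and b: "length b = 3" "order_iso b [1, 2, 3]"
      and mem: "\<forall>j<3. idx!j < length Bs \<and> b!j \<in> Bs!(idx!j)"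
    unfolding osp_contains_def by (auto simp: numeral_3_eq_3)
  obtain i j k where ijk: "idx = [i, j, k]" using idx(1)
    by (cases idx; cases "tl idx"; cases "tl (tl idx)") auto
  obtain x y z where xyz: "b = [x, y, z]" using b(1)
    by (cases b; cases "tl b"; cases "tl (tl b)") auto
  have "i < j" "j < k" using idx(2) ijk by auto
  moreover have "k < length Bs" "x \<in> Bs!i" "y \<in> Bs!j" "z \<in> Bs!k"
    using mem[rule_format, of 0] mem[rule_format, of 1] mem[rule_format, of 2] ijk xyz by auto
  moreover have "x < y \<and> y < z" using b(2) xyz order_iso_123_iff by simp
  ultimately show "\<exists>i j k x y z. i < j \<and> j < k \<and> k < length Bs \<and> x \<in> Bs!i \<and> y \<in> Bs!j \<and>
      z \<in> Bs!k \<and> x < y \<and> y < z"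
    by blast
next
  assume "\<exists>i j k x y z. i < j \<and> j < k \<and> k < length Bs \<and> x \<in> Bs!i \<and> y \<in> Bs!j \<and>
      z \<in> Bs!k \<and> x < y \<and> y < z"
  then obtain i j k x y z where "i < j" "j < k" "k < length Bs" "x \<in> Bs!i" "y \<in> Bs!j"
      "z \<in> Bs!k" "x < y" "y < z"
    by blast
  moreover from this have "order_iso [x, y, z] [1, 2, 3]" using order_iso_123_iff by blast
  ultimately show "osp_contains Bs [1, 2, 3]"
    unfolding osp_contains_def
    by - (rule exI[of _ "[i, j, k]"], rule exI[of _ "[x, y, z]"], auto simp: less_Suc_eq)
qed

text \<open>\<open>merge_at w q\<close> turns the word \<open>w\<close> into an ordered partition with one block per entry,
  except that the entries at positions \<open>q\<close> and \<open>q + 1\<close> share a block. Position \<open>a\<close> of \<open>w\<close> lies in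
  block \<open>block_of q a\<close>.\<close>

definition merged_positions :: "nat \<Rightarrow> nat \<Rightarrow> nat set" where
  "merged_positions q i = (if i < q then {i} else if i = q then {q, Suc q} else {Suc i})"

definition merge_at :: "nat list \<Rightarrow> nat \<Rightarrow> nat set list" where
  "merge_at w q = map (\<lambda>i. (!) w ` merged_positions q i) [0..<length w - 1]"

definition block_of :: "nat \<Rightarrow> nat \<Rightarrow> nat" where
  "block_of q a = (if a \<le> q then a else a - 1)"

lemma length_merge_at [simp]: "length (merge_at w q) = length w - 1"
  by (simp add: merge_at_def)

lemma nth_merge_at [simp]:
  "i < length w - 1 \<Longrightarrow> merge_at w q ! i = (!) w ` merged_positions q i"
  by (simp add: merge_at_def)

lemma merged_positions_less:
  "i < j \<Longrightarrow> a \<in> merged_positions q i \<Longrightarrow> b \<in> merged_positions q j \<Longrightarrow> a < b"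
  by (auto simp: merged_positions_def split: if_splits)

lemma merged_positions_subset: "q < M \<Longrightarrow> i < M \<Longrightarrow> merged_positions q i \<subseteq> {..<Suc M}"
  by (auto simp: merged_positions_def)

lemma mem_merged_positions_block_of: "a \<in> merged_positions q (block_of q a)"
  by (auto simp: merged_positions_def block_of_def)

lemma block_of_less: "q < M \<Longrightarrow> a < Suc M \<Longrightarrow> block_of q a < M"
  by (auto simp: block_of_def)

lemma block_of_strict_mono: "a < b \<Longrightarrow> \<not> (a = q \<and> b = Suc q) \<Longrightarrow> block_of q a < block_of q b"
  by (auto simp: block_of_def)

lemma UN_merged_positions: "q < M \<Longrightarrow> (\<Union>i<M. merged_positions q i) = {..<Suc M}"
  using merged_positions_subset block_of_less mem_merged_positions_block_of by fastforce

lemma UN_merge_at: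
  assumes "length w = Suc M" "q < M"
  shows "(\<Union>i<M. merge_at w q ! i) = set w"
proof -
  have "(\<Union>i<M. merge_at w q ! i) = (!) w ` (\<Union>i<M. merged_positions q i)"
    using assms(1) by (simp add: image_UN)
  also have "\<dots> = set w" using UN_merged_positions[OF assms(2)] assms(1) by (auto simp: in_set_conv_nth)
  finally show ?thesis .
qed

lemma card_merge_at:
  assumes "distinct w" "length w = Suc M" "q < M" "i < M"
  shows "card (merge_at w q ! i) = (if i = q then 2 else 1)"
proof -
  have "inj_on ((!) w) (merged_positions q i)"
    using assms merged_positions_subset[of q M i] by (intro inj_on_nth) auto
  then show ?thesis using assms(2,4) by (simp add: card_image merged_positions_def)
qed

lemma ordered_set_partition_merge_at:
  assumes dist: "distinct w" and set_w: "set w = {1..Suc M}" and "q < M"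
  shows "ordered_set_partition (Suc M) M (merge_at w q)"
proof -
  have len: "length w = Suc M" using dist set_w distinct_card by fastforce
  have inj: "inj_on ((!) w) {..<Suc M}" using dist len by (simp add: inj_on_nth)
  show ?thesis unfolding ordered_set_partition_def
  proof (intro conjI allI impI)
    show "length (merge_at w q) = M" using len by simp
    show "merge_at w q ! i \<noteq> {}" if "i < M" for i
      using that len by (simp add: merged_positions_def)
    show "merge_at w q ! i \<inter> merge_at w q ! j = {}" if "i < M" "j < M" "i \<noteq> j" for i j
    proof -
      have "merged_positions q i \<inter> merged_positions q j = {}"
        using that by (auto simp: merged_positions_def)
      then show ?thesis
        using that len inj_on_image_Int[OF inj, of "merged_positions q i" "merged_positions q j"]
          merged_positions_subset[OF \<open>q < M\<close>]
        by simp
    qed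
    show "(\<Union>i<M. merge_at w q ! i) = {1..Suc M}"
      using UN_merge_at[OF len \<open>q < M\<close>] set_w by simp
  qed
qed

lemma osp_contains_merge_at_iff:
  assumes len: "length w = Suc M" and "q < M" and desc: "descent_at w q"
  shows "osp_contains (merge_at w q) [1, 2, 3] \<longleftrightarrow> \<not> avoids_123 w"
proof
  have block: "merge_at w q ! l = (!) w ` merged_positions q l" if "l < M" for l
    using that len by simp
  assume "osp_contains (merge_at w q) [1, 2, 3]"
  then obtain i j k x y z where ijk: "i < j" "j < k" "k < M"
      and xyz: "x \<in> merge_at w q ! i" "y \<in> merge_at w q ! j" "z \<in> merge_at w q ! k" "x < y" "y < z"
    unfolding osp_contains_123_iff using len by auto
  obtain a where a: "a \<in> merged_positions q i" "x = w!a" using xyz(1) block[of i] ijk by auto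
  obtain b where b: "b \<in> merged_positions q j" "y = w!b" using xyz(2) block[of j] ijk by auto
  obtain c where c: "c \<in> merged_positions q k" "z = w!c" using xyz(3) block[of k] ijk by auto
  have "a < b" "b < c" using merged_positions_less ijk a(1) b(1) c(1) by blast+
  moreover have "c < length w" using merged_positions_subset[OF \<open>q < M\<close> ijk(3)] c(1) len by auto
  ultimately show "\<not> avoids_123 w" using xyz a b c unfolding avoids_123_def by blast
next
  assume "\<not> avoids_123 w"
  then obtain a b c where abc: "a < b" "b < c" "c < length w" "w!a < w!b" "w!b < w!c"
    unfolding avoids_123_def by blast
  \<comment> \<open>the descent at \<open>q\<close> keeps the two entries of the merged block apart in any 123\<close>
  have "w!Suc q < w!q" using desc by (simp add: descent_at_def)
  then have "\<not> (a = q \<and> b = Suc q)" "\<not> (b = q \<and> c = Suc q)" using abc(4,5) by auto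
  then have "block_of q a < block_of q b" "block_of q b < block_of q c"
    using block_of_strict_mono abc(1,2) by blast+
  moreover have "block_of q c < M" using block_of_less[OF \<open>q < M\<close>] abc len by simp
  moreover have "w!p \<in> merge_at w q ! block_of q p" if "block_of q p < M" for p
    using that len mem_merged_positions_block_of by simp
  ultimately have "w!a \<in> merge_at w q ! block_of q a" "w!b \<in> merge_at w q ! block_of q b"
    "w!c \<in> merge_at w q ! block_of q c" "block_of q c < length (merge_at w q)"
    using len by auto
  then show "osp_contains (merge_at w q) [1, 2, 3]"
    unfolding osp_contains_123_iff using abc \<open>block_of q a < block_of q b\<close> \<open>block_of q b < block_of q c\<close>
    by blast
qed

lemma merge_at_inj:
  assumes w: "distinct w" "length w = Suc M" "descent_at w q" "q < M"
    and w': "distinct w'" "length w' = Suc M" "descent_at w' q'" "q' < M"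
    and eq: "merge_at w q = merge_at w' q'"
  shows "q = q' \<and> w = w'"
proof -
  have block_eq: "(!) w ` merged_positions q i = (!) w' ` merged_positions q' i" if "i < M" for i
    using arg_cong[OF eq, of "\<lambda>Bs. Bs ! i"] that w(2) w'(2) by simp
  have "q = q'"
    using card_merge_at[OF w(1,2,4,4)] card_merge_at[OF w'(1,2,4) w(4)] arg_cong[OF eq, of "\<lambda>Bs. card (Bs ! q)"]
    by (auto split: if_splits)
  \<comment> \<open>inside the merged block the order of the two entries is fixed by the descent\<close>
  have pair: "w!q = w'!q \<and> w!Suc q = w'!Suc q"
  proof -
    have "{w!q, w!Suc q} = {w'!q, w'!Suc q}"
      using block_eq[OF w(4)] \<open>q = q'\<close> by (simp add: merged_positions_def)
    moreover have "w!Suc q < w!q" "w'!Suc q < w'!q"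
      using w(3) w'(3) \<open>q = q'\<close> by (auto simp: descent_at_def)
    ultimately show ?thesis by (auto simp: doubleton_eq_iff)
  qed
  have "w!a = w'!a" if "a < Suc M" for a
  proof (cases "a = q \<or> a = Suc q")
    case True
    then show ?thesis using pair by auto
  next
    case False
    then have "merged_positions q (block_of q a) = {a}"
      by (auto simp: merged_positions_def block_of_def)
    then show ?thesis
      using block_eq[OF block_of_less[OF w(4) that]] \<open>q = q'\<close> by simp
  qed
  then show ?thesis using w(2) w'(2) \<open>q = q'\<close> by (auto intro: nth_equalityI)
qed

lemma ordered_set_partition_one_doubleton:
  assumes "ordered_set_partition (Suc M) M Bs"
  shows "\<exists>q<M. card (Bs!q) = 2 \<and> (\<forall>i<M. i \<noteq> q \<longrightarrow> card (Bs!i) = 1)"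
proof -
  have ne: "\<And>i. i < M \<Longrightarrow> Bs!i \<noteq> {}"
    and disj: "\<And>i j. i < M \<Longrightarrow> j < M \<Longrightarrow> i \<noteq> j \<Longrightarrow> Bs!i \<inter> Bs!j = {}"
    and union: "(\<Union>i<M. Bs!i) = {1..Suc M}"
    using assms unfolding ordered_set_partition_def by auto
  have fin: "finite (Bs!i)" if "i < M" for i
  proof (rule finite_subset)
    show "Bs!i \<subseteq> {1..Suc M}" using union that by blast
  qed simp
  have pos: "1 \<le> card (Bs!i)" if "i < M" for i
    using ne[OF that] fin[OF that] by (simp add: Suc_le_eq card_gt_0_iff)
  have "(\<Sum>i<M. card (Bs!i)) = card (\<Union>i<M. Bs!i)"
    by (rule card_UN_disjoint[symmetric]) (use fin disj in auto)
  \<comment> \<open>\<open>M\<close> nonempty blocks share \<open>M + 1\<close> elements, so exactly one block has one extra element\<close>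
  then have "(\<Sum>i<M. card (Bs!i) - 1) = 1"
    using sum_subtractf_nat[of "{..<M}" "\<lambda>_. 1" "\<lambda>i. card (Bs!i)"] pos union by simp
  then have "\<exists>q\<in>{..<M}. card (Bs!q) - 1 = 1 \<and> (\<forall>i\<in>{..<M}. q \<noteq> i \<longrightarrow> card (Bs!i) - 1 = 0)"
    using sum_eq_1_iff[OF finite_lessThan[of M], where f = "\<lambda>i. card (Bs!i) - 1"] by simp
  then obtain q where q: "q \<in> {..<M}" "card (Bs!q) - 1 = 1"
    and others: "\<forall>i\<in>{..<M}. q \<noteq> i \<longrightarrow> card (Bs!i) - 1 = 0"
    by (elim bexE conjE)
  have "card (Bs!i) = 1" if "i < M" "i \<noteq> q" for i using others that pos[OF that(1)] by auto
  moreover have "card (Bs!q) = 2" using q(2) by simp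
  ultimately show ?thesis using q(1) by auto
qed

lemma merge_at_surj:
  assumes osp: "ordered_set_partition (Suc M) M Bs"
  shows "\<exists>q w. q < M \<and> distinct w \<and> set w = {1..Suc M} \<and> descent_at w q \<and> merge_at w q = Bs"
proof -
  have len: "length Bs = M" and union: "(\<Union>i<M. Bs!i) = {1..Suc M}"
    using osp unfolding ordered_set_partition_def by auto
  obtain q where "q < M" and double: "card (Bs!q) = 2"
    and single: "\<And>i. i < M \<Longrightarrow> i \<noteq> q \<Longrightarrow> card (Bs!i) = 1"
    using ordered_set_partition_one_doubleton[OF osp] by blast
  obtain lo hi where pair: "Bs!q = {hi, lo}" "lo < hi"
    using double by (auto simp: card_2_iff linorder_neq_iff)
  \<comment> \<open>list the blocks in order, the doubleton in decreasing order\<close>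
  define w where "w = map (\<lambda>a. if a = q then hi else if a = Suc q then lo
      else the_elem (Bs ! block_of q a)) [0..<Suc M]"
  have len_w: "length w = Suc M" by (simp add: w_def)
  have "merge_at w q ! i = Bs!i" if i: "i < M" for i
  proof (cases "i = q")
    case True
    then show ?thesis using i pair len_w
      by (simp add: w_def merged_positions_def nth_append del: upt_Suc)
  next
    case False
    then obtain x where "Bs!i = {x}" using single[OF i] by (auto simp: card_Suc_eq)
    moreover have "merged_positions q i = {if i < q then i else Suc i}"
      using False by (simp add: merged_positions_def)
    ultimately show ?thesis using i False \<open>q < M\<close> len_w
      by (simp add: w_def block_of_def nth_append del: upt_Suc)
  qed
  then have merge: "merge_at w q = Bs" using len len_w by (intro nth_equalityI) auto
  have set_w: "set w = {1..Suc M}" using UN_merge_at[OF len_w \<open>q < M\<close>] merge union by simp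
  moreover have "distinct w" using set_w len_w by (intro card_distinct) simp
  moreover have "descent_at w q" using pair \<open>q < M\<close> len_w by (simp add: w_def descent_at_def del: upt_Suc)
  ultimately show ?thesis using \<open>q < M\<close> merge by blast
qed

lemma bij_betw_merge_at:
  "bij_betw (\<lambda>(q, w). merge_at w q) (SIGMA q:{..<M}. {w \<in> Av123 (Suc M). descent_at w q})
    {Bs. ordered_set_partition (Suc M) M Bs \<and> \<not> osp_contains Bs [1, 2, 3]}"
  (is "bij_betw _ ?D ?P")
proof (rule bij_betw_imageI)
  show "inj_on (\<lambda>(q, w). merge_at w q) ?D"
  proof (rule inj_onI, clarsimp)
    fix q w q' w'
    assume "q < M" "w \<in> Av123 (Suc M)" "descent_at w q"
      and "q' < M" "w' \<in> Av123 (Suc M)" "descent_at w' q'" "merge_at w q = merge_at w' q'"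
    moreover have "length w = Suc M" "length w' = Suc M"
      using length_Av123 \<open>w \<in> Av123 (Suc M)\<close> \<open>w' \<in> Av123 (Suc M)\<close> by blast+
    ultimately show "q = q' \<and> w = w'"
      by (intro merge_at_inj[of w M q w' q']) (auto simp: Av123_def)
  qed
  show "(\<lambda>(q, w). merge_at w q) ` ?D = ?P"
  proof (intro equalityI subsetI)
    fix Bs assume "Bs \<in> (\<lambda>(q, w). merge_at w q) ` ?D"
    then obtain q w where "q < M" "w \<in> Av123 (Suc M)" "descent_at w q" "Bs = merge_at w q"
      by auto
    then show "Bs \<in> ?P"
      using ordered_set_partition_merge_at osp_contains_merge_at_iff length_Av123
      by (auto simp: Av123_def)
  next
    fix Bs assume "Bs \<in> ?P"
    then obtain q w where qw: "q < M" "distinct w" "set w = {1..Suc M}" "descent_at w q"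
        "merge_at w q = Bs"
      using merge_at_surj by blast
    moreover have "length w = Suc M" using qw(2,3) distinct_card by fastforce
    ultimately have "w \<in> Av123 (Suc M)"
      using \<open>Bs \<in> ?P\<close> osp_contains_merge_at_iff by (auto simp: Av123_def)
    then show "Bs \<in> (\<lambda>(q, w). merge_at w q) ` ?D" using qw by force
  qed
qed

lemma op_count_123_Suc:
  "op_count (Suc M) M [1, 2, 3] + M * card (Av123 M) = M * card (Av123 (Suc M))"
proof -
  have "op_count (Suc M) M [1, 2, 3] = (\<Sum>q<M. card {w \<in> Av123 (Suc M). descent_at w q})"
    using bij_betw_same_card[OF bij_betw_merge_at[of M]] unfolding op_count_def
    by (simp add: finite_Av123)
  then have "op_count (Suc M) M [1, 2, 3] + M * card (Av123 M) =
      (\<Sum>q<M. card {w \<in> Av123 (Suc M). descent_at w q} + card (Av123 M))"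
    by (simp add: sum.distrib)
  also have "\<dots> = M * card (Av123 (Suc M))" by (simp add: card_Av123_descent)
  finally show ?thesis .
qed

lemma op_count_123_closed_form:
  "(M + 2) * op_count (Suc M) M [1, 2, 3] = 3 * M^2 * card (Av123 M)"
proof -
  let ?A = "op_count (Suc M) M [1, 2, 3]" and ?c = "card (Av123 M)" and ?c' = "card (Av123 (Suc M))"
  have "(M + 2) * ?A + (M + 2) * (M * ?c) = M * ((M + 2) * ?c')"
    using arg_cong[OF op_count_123_Suc[of M], of "\<lambda>x. (M + 2) * x"]
    by (simp only: distrib_left mult.left_commute)
  also have "\<dots> = M * (2 * (2 * M + 1) * ?c)" by (simp only: card_Av123_Suc)
  also have "\<dots> = 3 * M^2 * ?c + (M + 2) * (M * ?c)" by (simp add: algebra_simps power2_eq_square)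
  finally show ?thesis by simp
qed

lemma real_op_count_123:
  "real (op_count (Suc M) M [1, 2, 3]) = 3 * real M ^ 2 * real (card (Av123 M)) / (real M + 2)"
  using arg_cong[OF op_count_123_closed_form[of M], of real] by (simp add: field_simps)

lemma real_card_Av123_Suc:
  "real (card (Av123 (Suc M))) = 2 * (2 * real M + 1) * real (card (Av123 M)) / (real M + 2)"
  using arg_cong[OF card_Av123_Suc[of M], of real] by (simp add: field_simps)

theorem theorem5:
  shows "op_count 2 1 [1,2,3] = 1 \<and>
    (\<forall>n::nat. n > 2 \<longrightarrow>
      real (op_count n (n - 1) [1,2,3]) =
        (4 * real n - 6) * (real n - 1)^2 / ((real n - 2)^2 * (real n + 1))
        * real (op_count (n - 1) (n - 2) [1,2,3]))"
proof (intro conjI allI impI)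
  have "card (Av123 1) = 1" using Suc_times_card_Av123[of 1] by simp
  then show "op_count 2 1 [1,2,3] = 1"
    using op_count_123_closed_form[of 1] by (simp add: numeral_2_eq_2)
next
  fix n :: nat assume "n > 2"
  define M where "M = n - 2"
  have n: "n = Suc (Suc M)" "n - 1 = Suc M" "n - 2 = M" and "M \<noteq> 0"
    using \<open>n > 2\<close> by (auto simp: M_def)
  then have "real M \<noteq> 0" "real M + 2 \<noteq> 0" "real M + 3 \<noteq> 0" by auto
  then show "real (op_count n (n - 1) [1,2,3]) =
      (4 * real n - 6) * (real n - 1)^2 / ((real n - 2)^2 * (real n + 1))
      * real (op_count (n - 1) (n - 2) [1,2,3])"
    unfolding n(2,3) unfolding n(1) real_op_count_123 real_card_Av123_Suc
    by (simp add: divide_simps)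
qed

end
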